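(* Let $\Gamma=\bigcup_i\gamma_i$ be an admissible finite collection of transverse unobstructed curves in $\Sigma$. Then every nonzero $b\in H_{\mathbb{R}}$ has both a positive and a negative coordinate in the canonical basis of $C$.
   Context: $\Sigma$ is a closed oriented surface of genus at least two; unobstructed curves are oriented immersed closed curves whose lifts to the universal cover are properly embedded lines. $C=C_2(\Sigma;\mathbb{Z})$ is the free $\mathbb{Z}$-module with basis the connected components of $\Sigma\setminus\Gamma$. The Euler measure $e(S)$ of a surface $S$ with corners is $\frac{1}{2\pi}$ times the integral of the curvature of a metric on $S$ for which the boundary is geodesic and the corners are right angles; it is additive under gluing along boundary segments, and extends to a linear form $e$ on $C$. $H\subset C$ is the subgroup of $2$-chains in $\ker e$ whose boundary is a linear combination of the curves $\gamma_i$, and $H_{\mathbb{R}}$ is its $\mathbb{R}$-span in $C_2(\Sigma;\mathbb{R})=C\otimes\mathbb{R}$. The collection $\Gamma$ is admissible iff every nonzero $b\in H$ has both positive and negative coordinates in the canonical basis of $C$. *)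

theory Defs
  imports Complex_Main "HOL-Library.Function_Algebras"
begin

text \<open>The connected components of
  Sigma minus Gamma are the elements of a finite type 'f, the edges of the
  graph Gamma (arcs between crossings) are the elements of a finite type 'e,
  and the curves gamma_i are indexed by a finite type 'i.
  A 2-chain in C = C_2(Sigma; Z) is a function 'f => int (its coordinates in the
  canonical basis); a real 2-chain is a function 'f => real.
  eul f is the Euler measure of the region f; bd f ed is the coefficient of
  the (oriented) edge ed in the boundary of region f; gam i ed is the
  coefficient of the edge ed in the 1-cycle given by the curve gamma_i.\<close>

definition euler :: "('f::finite \<Rightarrow> real) \<Rightarrow> ('f \<Rightarrow> int) \<Rightarrow> real" where
  "euler eul b = (\<Sum>f\<in>UNIV. real_of_int (b f) * eul f)"

definition boundary :: "('f::finite \<Rightarrow> 'e \<Rightarrow> int) \<Rightarrow> ('f \<Rightarrow> int) \<Rightarrow> ('e \<Rightarrow> int)" where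
  "boundary bd b = (\<lambda>ed. \<Sum>f\<in>UNIV. b f * bd f ed)"

definition Hgrp :: "('f::finite \<Rightarrow> real) \<Rightarrow> ('f \<Rightarrow> 'e \<Rightarrow> int) \<Rightarrow> ('i::finite \<Rightarrow> 'e \<Rightarrow> int)
                    \<Rightarrow> ('f \<Rightarrow> int) set" where
  "Hgrp eul bd gam = {b. euler eul b = 0 \<and>
       (\<exists>c :: 'i \<Rightarrow> int. boundary bd b = (\<lambda>ed. \<Sum>i\<in>UNIV. c i * gam i ed))}"

definition HR :: "('f::finite \<Rightarrow> real) \<Rightarrow> ('f \<Rightarrow> 'e \<Rightarrow> int) \<Rightarrow> ('i::finite \<Rightarrow> 'e \<Rightarrow> int)
                    \<Rightarrow> ('f \<Rightarrow> real) set" where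
  "HR eul bd gam = {x. \<exists>S r. finite S \<and> S \<subseteq> Hgrp eul bd gam \<and>
       x = (\<lambda>f. \<Sum>h\<in>S. r h * real_of_int (h f))}"

definition admissible :: "('f::finite \<Rightarrow> real) \<Rightarrow> ('f \<Rightarrow> 'e \<Rightarrow> int) \<Rightarrow> ('i::finite \<Rightarrow> 'e \<Rightarrow> int) \<Rightarrow> bool" where
  "admissible eul bd gam \<longleftrightarrow>
     (\<forall>b\<in>Hgrp eul bd gam. b \<noteq> 0 \<longrightarrow> (\<exists>f. b f > 0) \<and> (\<exists>f. b f < 0))"

end

theory Submission
  imports Defs
begin

text \<open>Suppose some nonzero b in H_R had no negative coordinate, and write b as a real
  combination of finitely many elements of H.  The coefficient vectors for which the combination
  vanishes on the zero set of b form the solution space of a rational linear system, so they can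
  be approximated by rational ones; a close enough approximation keeps the positive coordinates
  of b positive.  Clearing denominators then gives a nonzero element of H without negative
  coordinates, contradicting admissibility.  Applying this to -b gives a positive coordinate.\<close>

lemma Rats_common_denominator:
  assumes "finite J" and "\<forall>j\<in>J. q j \<in> \<rat>"
  shows "\<exists>D::int. D > 0 \<and> (\<forall>j\<in>J. of_int D * q j \<in> \<int>)"
  using assms
proof (induction J rule: finite_induct)
  case empty
  show ?case by (intro exI[of _ 1]) auto
next
  case (insert j J)
  then obtain D :: int where D: "D > 0" "\<forall>k\<in>J. of_int D * q k \<in> \<int>"
    by auto
  obtain a b :: int where ab: "b > 0" "q j = of_int a / of_int b"
    using insert.prems Rats_cases' by (metis insert_iff)
  have "of_int (D * b) * q k \<in> \<int>" if "k \<in> J" for k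
    using D(2) that by (metis Ints_mult Ints_of_int mult.commute mult.left_commute of_int_mult)
  moreover have "of_int (D * b) * q j \<in> \<int>"
    using ab by simp
  ultimately show ?case
    using D(1) ab(1) by (intro exI[of _ "D * b"]) auto
qed

lemma Rats_approx_scaled:
  fixes c :: "'a \<Rightarrow> real"
  assumes "finite F" and "\<epsilon> > 0"
  obtains t where "t \<in> \<rat>" and "\<forall>f\<in>F. \<bar>c f * (t - x)\<bar> < \<epsilon>"
proof -
  define M where "M = 1 + (\<Sum>f\<in>F. \<bar>c f\<bar>)"
  have "M > 0"
    unfolding M_def by (simp add: add_pos_nonneg sum_nonneg)
  have M_bound: "\<bar>c f\<bar> < M" if "f \<in> F" for f
    using assms(1) that member_le_sum[of f F "\<lambda>f. \<bar>c f\<bar>"] unfolding M_def by simp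
  have "\<epsilon> / M > 0"
    using \<open>M > 0\<close> assms(2) by simp
  then obtain t where t: "t \<in> \<rat>" "x - \<epsilon> / M < t" "t < x + \<epsilon> / M"
    using Rats_dense_in_real[of "x - \<epsilon> / M" "x + \<epsilon> / M"] by auto
  have "\<bar>c f * (t - x)\<bar> < \<epsilon>" if "f \<in> F" for f
  proof -
    have "\<bar>c f * (t - x)\<bar> = \<bar>c f\<bar> * \<bar>t - x\<bar>"
      by (simp add: abs_mult)
    also have "\<dots> \<le> M * \<bar>t - x\<bar>"
      using M_bound[OF that] by (intro mult_right_mono) auto
    also have "\<dots> < M * (\<epsilon> / M)"
      using \<open>M > 0\<close> t(2,3) by (intro mult_strict_left_mono) auto
    finally show ?thesis
      using \<open>M > 0\<close> by simp
  qed
  then show ?thesis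
    using t(1) that by blast
qed

definition rational_approximable ::
    "'j set \<Rightarrow> 'a set \<Rightarrow> ('j \<Rightarrow> 'a \<Rightarrow> real) \<Rightarrow> ('j \<Rightarrow> real) \<Rightarrow> real \<Rightarrow> bool" where
  "rational_approximable J F L r \<epsilon> \<longleftrightarrow> (\<exists>q. (\<forall>j\<in>J. q j \<in> \<rat>)
     \<and> (\<forall>f\<in>F. (\<Sum>j\<in>J. r j * L j f) = 0 \<longrightarrow> (\<Sum>j\<in>J. q j * L j f) = 0)
     \<and> (\<forall>f\<in>F. \<bar>(\<Sum>j\<in>J. q j * L j f) - (\<Sum>j\<in>J. r j * L j f)\<bar> < \<epsilon>))"

lemma sum_insert_fun_upd:
  assumes "finite J" and "j \<notin> J"
  shows "(\<Sum>k\<in>insert j J. (q(j := t)) k * M k) = t * M j + (\<Sum>k\<in>J. q k * M k)"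
proof -
  have "(\<Sum>k\<in>J. (q(j := t)) k * M k) = (\<Sum>k\<in>J. q k * M k)"
    using assms(2) by (intro sum.cong) auto
  then show ?thesis
    using assms by simp
qed

text \<open>Gaussian elimination of the variable j through the form g: the forms L' on the remaining
  variables agree with L on every vector annihilated by the form g.\<close>

lemma rational_approximable_insert_eliminate:
  assumes "finite J" and "j \<notin> J" and "g \<in> F"
    and g: "(\<Sum>k\<in>insert j J. r k * L k g) = 0" "L j g \<noteq> 0"
    and rat: "\<forall>k\<in>insert j J. \<forall>f\<in>F. L k f \<in> \<rat>"
    and approx: "rational_approximable J F (\<lambda>k f. L k f - L j f * L k g / L j g) r \<epsilon>"
  shows "rational_approximable (insert j J) F L r \<epsilon>"
proof -
  define L' where "L' k f = L k f - L j f * L k g / L j g" for k f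
  have eliminated: "(\<Sum>k\<in>J. x k * L' k f)
      = (\<Sum>k\<in>insert j J. x k * L k f) - L j f / L j g * (\<Sum>k\<in>insert j J. x k * L k g)"
    for x f
    using assms(1,2) g(2)
    by (simp add: L'_def right_diff_distrib sum_subtractf sum_distrib_left algebra_simps)
  obtain q' where q': "\<forall>k\<in>J. q' k \<in> \<rat>"
    "\<forall>f\<in>F. (\<Sum>k\<in>J. r k * L' k f) = 0 \<longrightarrow> (\<Sum>k\<in>J. q' k * L' k f) = 0"
    "\<forall>f\<in>F. \<bar>(\<Sum>k\<in>J. q' k * L' k f) - (\<Sum>k\<in>J. r k * L' k f)\<bar> < \<epsilon>"
    using approx unfolding rational_approximable_def L'_def by blast
  define q where "q = q'(j := - (\<Sum>k\<in>J. q' k * L k g) / L j g)"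
  have "(\<Sum>k\<in>insert j J. q k * L k g) = 0"
    using g(2) unfolding q_def sum_insert_fun_upd[OF assms(1,2)] by simp
  moreover have "(\<Sum>k\<in>J. q k * L' k f) = (\<Sum>k\<in>J. q' k * L' k f)" for f
    using assms(2) by (intro sum.cong) (auto simp: q_def)
  ultimately have "(\<Sum>k\<in>insert j J. q k * L k f) = (\<Sum>k\<in>J. q' k * L' k f)" for f
    using eliminated[of q f] by simp
  moreover have "(\<Sum>k\<in>insert j J. r k * L k f) = (\<Sum>k\<in>J. r k * L' k f)" for f
    using eliminated[of r f] g(1) by simp
  moreover have "\<forall>k\<in>insert j J. q k \<in> \<rat>"
    using q'(1) rat \<open>g \<in> F\<close> by (auto simp: q_def intro!: Rats_divide Rats_sum)
  ultimately show ?thesis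
    unfolding rational_approximable_def using q'(2,3) by (intro exI[of _ q]) auto
qed

lemma rational_approximable_insert_free:
  assumes "finite J" and "j \<notin> J" and "finite F" and "\<epsilon> > 0"
    and free: "\<forall>f\<in>F. (\<Sum>k\<in>insert j J. r k * L k f) = 0 \<longrightarrow> L j f = 0"
    and approx: "rational_approximable J F L r (\<epsilon> / 2)"
  shows "rational_approximable (insert j J) F L r \<epsilon>"
proof -
  obtain t where t: "t \<in> \<rat>" "\<forall>f\<in>F. \<bar>L j f * (t - r j)\<bar> < \<epsilon> / 2"
    using Rats_approx_scaled[OF \<open>finite F\<close>, of "\<epsilon> / 2" "L j" "r j"] \<open>\<epsilon> > 0\<close> by auto
  obtain q' where q': "\<forall>k\<in>J. q' k \<in> \<rat>"
    "\<forall>f\<in>F. (\<Sum>k\<in>J. r k * L k f) = 0 \<longrightarrow> (\<Sum>k\<in>J. q' k * L k f) = 0"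
    "\<forall>f\<in>F. \<bar>(\<Sum>k\<in>J. q' k * L k f) - (\<Sum>k\<in>J. r k * L k f)\<bar> < \<epsilon> / 2"
    using approx unfolding rational_approximable_def by blast
  define q where "q = q'(j := t)"
  have q_sum: "(\<Sum>k\<in>insert j J. q k * L k f) = t * L j f + (\<Sum>k\<in>J. q' k * L k f)" for f
    unfolding q_def sum_insert_fun_upd[OF assms(1,2)] ..
  have "(\<Sum>k\<in>insert j J. q k * L k f) = 0"
    if "f \<in> F" "(\<Sum>k\<in>insert j J. r k * L k f) = 0" for f
    using free that q'(2) q_sum[of f] assms(1,2) by auto
  moreover have "\<bar>(\<Sum>k\<in>insert j J. q k * L k f) - (\<Sum>k\<in>insert j J. r k * L k f)\<bar> < \<epsilon>"
    if "f \<in> F" for f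
  proof -
    have "(\<Sum>k\<in>insert j J. q k * L k f) - (\<Sum>k\<in>insert j J. r k * L k f)
        = ((\<Sum>k\<in>J. q' k * L k f) - (\<Sum>k\<in>J. r k * L k f)) + L j f * (t - r j)"
      using q_sum[of f] assms(1,2) by (simp add: algebra_simps)
    also have "\<bar>\<dots>\<bar> \<le> \<bar>(\<Sum>k\<in>J. q' k * L k f) - (\<Sum>k\<in>J. r k * L k f)\<bar> + \<bar>L j f * (t - r j)\<bar>"
      by (rule abs_triangle_ineq)
    also have "\<dots> < \<epsilon> / 2 + \<epsilon> / 2"
      using q'(3) t(2) that by (intro add_strict_mono) auto
    finally show ?thesis
      by simp
  qed
  moreover have "\<forall>k\<in>insert j J. q k \<in> \<rat>"
    using q'(1) t(1) by (simp add: q_def)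
  ultimately show ?thesis
    unfolding rational_approximable_def by (intro exI[of _ q]) auto
qed

lemma rational_forms_rational_approximable:
  assumes "finite J" and "finite F" and "\<forall>j\<in>J. \<forall>f\<in>F. L j f \<in> \<rat>" and "\<epsilon> > 0"
  shows "rational_approximable J F L r \<epsilon>"
  using assms(1,3,4)
proof (induction J arbitrary: L r \<epsilon> rule: finite_induct)
  case empty
  then show ?case
    unfolding rational_approximable_def by auto
next
  case (insert j J)
  show ?case
  proof (cases "\<exists>g\<in>F. (\<Sum>k\<in>insert j J. r k * L k g) = 0 \<and> L j g \<noteq> 0")
    case True
    then obtain g where "g \<in> F" "(\<Sum>k\<in>insert j J. r k * L k g) = 0" "L j g \<noteq> 0"
      by blast
    moreover have "\<forall>k\<in>J. \<forall>f\<in>F. L k f - L j f * L k g / L j g \<in> \<rat>"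
      using insert.prems(1) \<open>g \<in> F\<close> by auto
    ultimately show ?thesis
      using insert.IH insert.prems(1,2)
      by (intro rational_approximable_insert_eliminate[OF insert.hyps]) auto
  next
    case False
    then show ?thesis
      using insert.IH insert.prems assms(2)
      by (intro rational_approximable_insert_free[OF insert.hyps]) auto
  qed
qed

lemma euler_lincomb:
  "euler eul (\<lambda>f. \<Sum>h\<in>S. k h * h f) = (\<Sum>h\<in>S. of_int (k h) * euler eul h)"
  unfolding euler_def by (simp add: sum_distrib_left sum_distrib_right mult.assoc sum.swap[of _ UNIV])

lemma boundary_lincomb:
  "boundary bd (\<lambda>f. \<Sum>h\<in>S. k h * h f) = (\<lambda>ed. \<Sum>h\<in>S. k h * boundary bd h ed)"
  unfolding boundary_def by (simp add: sum_distrib_left sum_distrib_right mult.assoc sum.swap[of _ UNIV])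

lemma Hgrp_lincomb:
  assumes "S \<subseteq> Hgrp eul bd gam"
  shows "(\<lambda>f. \<Sum>h\<in>S. k h * h f) \<in> Hgrp eul bd gam"
proof -
  have "\<forall>h\<in>S. \<exists>c. boundary bd h = (\<lambda>ed. \<Sum>i\<in>UNIV. c i * gam i ed)"
    using assms unfolding Hgrp_def by blast
  then obtain c where c: "\<forall>h\<in>S. boundary bd h = (\<lambda>ed. \<Sum>i\<in>UNIV. c h i * gam i ed)"
    by metis
  have "\<forall>h\<in>S. euler eul h = 0"
    using assms unfolding Hgrp_def by auto
  then have "euler eul (\<lambda>f. \<Sum>h\<in>S. k h * h f) = 0"
    unfolding euler_lincomb by simp
  moreover have "boundary bd (\<lambda>f. \<Sum>h\<in>S. k h * h f)
      = (\<lambda>ed. \<Sum>i\<in>UNIV. (\<Sum>h\<in>S. k h * c h i) * gam i ed)"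
    using c by (simp add: boundary_lincomb sum_distrib_left sum_distrib_right mult.assoc
        sum.swap[of _ UNIV])
  ultimately show ?thesis
    unfolding Hgrp_def by (intro CollectI conjI exI)
qed

lemma HR_uminus:
  assumes "b \<in> HR eul bd gam"
  shows "- b \<in> HR eul bd gam"
proof -
  obtain S r where "finite S" "S \<subseteq> Hgrp eul bd gam"
    and "b = (\<lambda>f. \<Sum>h\<in>S. r h * real_of_int (h f))"
    using assms unfolding HR_def by blast
  then show ?thesis
    unfolding HR_def by (intro CollectI exI[of _ S] exI[of _ "- r"]) (auto simp: sum_negf)
qed

lemma nonneg_combination_rational_coeffs:
  fixes b :: "'f::finite \<Rightarrow> real"
  assumes "finite S" and b: "b = (\<lambda>f. \<Sum>h\<in>S. r h * real_of_int (h f))"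
    and nonneg: "\<forall>f. b f \<ge> 0" and "b f0 > 0"
  obtains q where "\<forall>h\<in>S. q h \<in> \<rat>"
    and "\<forall>f. (\<Sum>h\<in>S. q h * real_of_int (h f)) \<ge> 0"
    and "(\<Sum>h\<in>S. q h * real_of_int (h f0)) > 0"
proof -
  define \<epsilon> where "\<epsilon> = Min (b ` {f. b f > 0})"
  have "\<epsilon> > 0"
    unfolding \<epsilon>_def using \<open>b f0 > 0\<close> by (subst Min_gr_iff) auto
  have \<epsilon>_le: "\<epsilon> \<le> b f" if "b f > 0" for f
    unfolding \<epsilon>_def using that by (intro Min_le) auto
  obtain q where q: "\<forall>h\<in>S. q h \<in> \<rat>"
    "\<forall>f. b f = 0 \<longrightarrow> (\<Sum>h\<in>S. q h * real_of_int (h f)) = 0"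
    "\<forall>f. \<bar>(\<Sum>h\<in>S. q h * real_of_int (h f)) - b f\<bar> < \<epsilon>"
    using rational_forms_rational_approximable[OF \<open>finite S\<close> finite_UNIV _ \<open>\<epsilon> > 0\<close>,
        of "\<lambda>h f. real_of_int (h f)" r]
    unfolding b rational_approximable_def by auto
  have pos: "(\<Sum>h\<in>S. q h * real_of_int (h f)) > 0" if "b f > 0" for f
    using spec[OF q(3), of f] \<epsilon>_le[OF that] by linarith
  then have "(\<Sum>h\<in>S. q h * real_of_int (h f)) \<ge> 0" for f
    using q(2) nonneg by (metis order.order_iff_strict)
  then show ?thesis
    using that q(1) pos \<open>b f0 > 0\<close> by blast
qed

lemma admissible_HR_nonneg_imp_zero:
  assumes adm: "admissible eul bd gam" and "b \<in> HR eul bd gam" and nonneg: "\<forall>f. b f \<ge> 0"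
  shows "b = 0"
proof (rule ccontr)
  assume "b \<noteq> 0"
  then obtain f0 where "b f0 > 0"
    using nonneg by (metis less_eq_real_def zero_fun_def ext)
  obtain S r where S: "finite S" "S \<subseteq> Hgrp eul bd gam"
    and b: "b = (\<lambda>f. \<Sum>h\<in>S. r h * real_of_int (h f))"
    using \<open>b \<in> HR eul bd gam\<close> unfolding HR_def by blast
  obtain q where q: "\<forall>h\<in>S. q h \<in> \<rat>"
    "\<forall>f. (\<Sum>h\<in>S. q h * real_of_int (h f)) \<ge> 0"
    "(\<Sum>h\<in>S. q h * real_of_int (h f0)) > 0"
    using nonneg_combination_rational_coeffs[OF S(1) b nonneg \<open>b f0 > 0\<close>] by blast
  obtain D :: int where D: "D > 0" "\<forall>h\<in>S. of_int D * q h \<in> \<int>"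
    using Rats_common_denominator[OF S(1) q(1)] by blast
  define a where "a = (\<lambda>f. \<Sum>h\<in>S. \<lfloor>of_int D * q h\<rfloor> * h f)"
  have a_scaled: "real_of_int (a f) = of_int D * (\<Sum>h\<in>S. q h * real_of_int (h f))" for f
    unfolding a_def using D(2) by (simp add: sum_distrib_left mult.assoc)
  have "a \<in> Hgrp eul bd gam"
    unfolding a_def using Hgrp_lincomb[OF S(2)] .
  moreover have "a f \<ge> 0" for f
    using a_scaled[of f] q(2) D(1) by (metis of_int_0_le_iff of_int_pos zero_le_mult_iff less_le)
  moreover have "a f0 > 0"
    using a_scaled[of f0] q(3) D(1) by (metis of_int_0_less_iff of_int_pos zero_less_mult_iff)
  ultimately show False
    using adm unfolding admissible_def by (metis less_irrefl not_le zero_fun_def)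
qed

theorem lemma3p3:
  fixes eul :: "'f::finite \<Rightarrow> real" and bd :: "'f \<Rightarrow> 'e \<Rightarrow> int" and gam :: "'i::finite \<Rightarrow> 'e \<Rightarrow> int"
  assumes "admissible eul bd gam"
    and "b \<in> HR eul bd gam" and "b \<noteq> 0"
  shows "(\<exists>f. b f > 0) \<and> (\<exists>f. b f < 0)"
proof
  show "\<exists>f. b f > 0"
  proof (rule ccontr)
    assume "\<not> (\<exists>f. b f > 0)"
    then have "- b = 0"
      using admissible_HR_nonneg_imp_zero[OF assms(1) HR_uminus[OF assms(2)]]
      by (simp add: not_less)
    then show False using assms(3) by simp
  qed
  show "\<exists>f. b f < 0"
    using admissible_HR_nonneg_imp_zero[OF assms(1,2)] assms(3) by (metis leI)
qed

end
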